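(* Let $f$ satisfy the Standing Assumptions with constants $L,\sigma,\sigma_f$. Fix $x\in\mathbb{R}^d$ and $\delta>0$, let $u$ be uniform on the unit sphere of $\mathbb{R}^d$, let $\xi,\zeta\sim\mathcal{D}$, with $u,\xi,\zeta$ mutually independent, and set $g=\frac{d}{\delta}\operatorname{sgn}\big(f(x+\delta u,\xi)-f(x,\zeta)\big)u$ (with $\operatorname{sgn}(0)$ assigned a fixed value in $\{1,-1\}$). Then $\mathbb{E}\|g\|^2=d^2/\delta^2$ and $$\mathbb{E}\big[\langle\nabla F(x),g\rangle\big]\;\ge\;\frac{c_d\,d}{\delta}\,\|\nabla F(x)\|-dL-\frac{d\,\sigma}{\delta}-\frac{4d\,\sigma_f}{\delta^2},$$ where $c_d:=\mathbb{E}\big[|\langle e_1,u\rangle|\big]>0$. Consequently, for $x^+=x-\eta g$ with $\eta>0$, $$\mathbb{E}[F(x^+)]\le F(x)-\frac{c_d\eta d}{\delta}\|\nabla F(x)\|+\eta dL+\frac{\eta d\sigma}{\delta}+\frac{4\eta d\sigma_f}{\delta^2}+\frac{L\eta^2d^2}{2\delta^2}.$$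
   Context: Standing Assumptions. $f:\mathbb{R}^d\times\Xi\to\mathbb{R}$, $(\Xi,\mathcal{D})$ a probability space. $f(\cdot,\xi)$ is twice continuously differentiable for every $\xi\in\Xi$, and $\|\nabla^2 f(x,\xi)\|\le L$ (operator norm) for all $x\in\mathbb{R}^d$, $\xi\in\Xi$. For each $x$, $f(x,\cdot)$ and $\nabla f(x,\cdot)$ are square-integrable, $F(x):=\mathbb{E}_{\xi\sim\mathcal{D}}[f(x,\xi)]$, and $\nabla F(x)=\mathbb{E}_{\xi}[\nabla f(x,\xi)]$. For all $x\in\mathbb{R}^d$: $\mathbb{E}_{\xi}\big[\|\nabla f(x,\xi)-\nabla F(x)\|^2\big]\le\sigma^2$ and $\mathbb{E}_{\xi}\big[f(x,\xi)^2\big]-F(x)^2\le\sigma_f^2$. Norms are Euclidean; $e_1$ is the first standard basis vector. *)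

theory Defs
  imports "HOL-Probability.Probability"
begin

definition sgn_with :: "real \<Rightarrow> real \<Rightarrow> real" where
  "sgn_with s0 t = (if t > 0 then 1 else if t < 0 then -1 else s0)"

text \<open>Uniform (normalised surface) distribution on the unit sphere of a Euclidean space,
  realised as the radial projection of the uniform distribution on the unit ball.\<close>
definition unif_sphere :: "'a::euclidean_space measure" where
  "unif_sphere = distr (uniform_measure lborel (ball 0 1)) borel (\<lambda>v. v /\<^sub>R norm v)"

definition first_basis :: "'a::euclidean_space" where
  "first_basis = (SOME b. b \<in> Basis)"

end

(*
  Put p = delta <grad F(x), u> and q = f(x + delta u, xi) - f(x, zeta) - p.  Whatever the sign
  convention at 0, sgn(p + q) p >= |p| - 2|q|, and |q| is at most the two evaluation noises
  |f(x + delta u, xi) - F(x + delta u)| + |f(x, zeta) - F(x)| plus the Taylor remainder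
  L delta^2 |u|^2 / 2.  Each noise has mean absolute deviation at most sigma_f (Cauchy-Schwarz),
  and E |<grad F(x), u>| = c_d |grad F(x)| because the uniform measure on the sphere is invariant
  under orthogonal maps; this gives the lower bound on E <grad F(x), g>.  Since |g| = d/delta
  almost surely, the descent bound is the quadratic upper bound for L-smooth F, averaged.
*)

theory Submission
  imports Defs
begin

section \<open>Invariance of Lebesgue measure under orthogonal maps\<close>

text \<open>Coordinates indexed by the basis identify an abstract Euclidean space with a space
  \<^typ>\<open>real^'n\<close>, where the library proves invariance of Lebesgue measure under orthogonal
  maps (for wellordered index types).\<close>

typedef (overloaded) 'a basis_index = "Basis :: 'a::euclidean_space set"
  using nonempty_Basis by blast

instance basis_index :: (euclidean_space) finite
proof
  have "(UNIV :: 'a basis_index set) = Abs_basis_index ` Basis"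
    using type_definition.univ[OF type_definition_basis_index] by simp
  then show "finite (UNIV :: 'a basis_index set)"
    by (metis finite_Basis finite_imageI)
qed

instantiation basis_index :: (euclidean_space) linorder
begin

definition less_eq_basis_index :: "'a basis_index \<Rightarrow> 'a basis_index \<Rightarrow> bool"
  where "less_eq_basis_index i j \<longleftrightarrow> to_nat i \<le> to_nat j"

definition less_basis_index :: "'a basis_index \<Rightarrow> 'a basis_index \<Rightarrow> bool"
  where "less_basis_index i j \<longleftrightarrow> to_nat i < to_nat j"

instance by standard (auto simp: less_eq_basis_index_def less_basis_index_def)

end

instance basis_index :: (euclidean_space) wellorder
proof
  fix P :: "'a basis_index \<Rightarrow> bool" and a
  assume step: "\<And>i. (\<And>j. j < i \<Longrightarrow> P j) \<Longrightarrow> P i"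
  have "\<forall>i. to_nat i = n \<longrightarrow> P i" for n
    by (induction n rule: less_induct) (use step in \<open>auto simp: less_basis_index_def\<close>)
  then show "P a" by blast
qed

lemma bij_betw_Rep_basis_index: "bij_betw Rep_basis_index UNIV (Basis :: 'a::euclidean_space set)"
  unfolding bij_betw_def using type_definition.Rep_range[OF type_definition_basis_index]
  by (auto simp: inj_def Rep_basis_index_inject)

lemma inner_Rep_basis_index:
  "Rep_basis_index i \<bullet> Rep_basis_index j = (if i = j then 1 else 0)"
  using Rep_basis_index[of i] Rep_basis_index[of j] Rep_basis_index_inject[of i j]
  by (auto simp: inner_Basis)

definition cart_of :: "'a::euclidean_space \<Rightarrow> real^'a basis_index"
  where "cart_of x = (\<chi> i. x \<bullet> Rep_basis_index i)"

definition of_cart :: "real^'a basis_index \<Rightarrow> 'a::euclidean_space"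
  where "of_cart y = (\<Sum>i\<in>UNIV. y$i *\<^sub>R Rep_basis_index i)"

lemma inner_of_cart_Rep_basis_index: "of_cart y \<bullet> Rep_basis_index i = y$i"
  by (simp add: of_cart_def inner_sum_left inner_Rep_basis_index if_distrib cong: if_cong)

lemma cart_of_of_cart [simp]: "cart_of (of_cart y) = y"
  by (simp add: cart_of_def inner_of_cart_Rep_basis_index vec_eq_iff)

lemma of_cart_cart_of [simp]: "of_cart (cart_of x) = x"
  unfolding of_cart_def cart_of_def
  using sum.reindex_bij_betw[OF bij_betw_Rep_basis_index, of "\<lambda>b. (x \<bullet> b) *\<^sub>R b"]
  by (simp add: euclidean_representation)

lemma inner_cart_of [simp]: "cart_of x \<bullet> cart_of y = x \<bullet> y"
proof -
  have "cart_of x \<bullet> cart_of y = (\<Sum>i\<in>UNIV. (x \<bullet> Rep_basis_index i) * (y \<bullet> Rep_basis_index i))"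
    by (simp add: inner_vec_def cart_of_def)
  also have "\<dots> = x \<bullet> y"
    unfolding euclidean_inner[of x y] by (rule sum.reindex_bij_betw[OF bij_betw_Rep_basis_index])
  finally show ?thesis .
qed

lemma linear_cart_of: "linear cart_of"
  by (rule linearI) (auto simp: cart_of_def vec_eq_iff inner_add_left)

lemma linear_of_cart: "linear of_cart"
  by (rule linearI) (auto simp: of_cart_def sum.distrib scaleR_add_left scaleR_sum_right)

lemma borel_measurable_linear:
  fixes T :: "'a::euclidean_space \<Rightarrow> 'b::euclidean_space"
  shows "linear T \<Longrightarrow> T \<in> borel_measurable borel"
  by (intro borel_measurable_continuous_onI linear_continuous_on)
    (simp add: linear_conv_bounded_linear[symmetric])

lemma borel_measurable_orthogonal_transformation:
  fixes T :: "'a::euclidean_space \<Rightarrow> 'a"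
  shows "orthogonal_transformation T \<Longrightarrow> T \<in> borel_measurable borel"
  by (simp add: borel_measurable_linear orthogonal_transformation_linear)

lemma of_cart_vimage_box: "of_cart -` box l u = box (cart_of l) (cart_of u)"
proof -
  have "of_cart y \<in> box l u \<longleftrightarrow> y \<in> box (cart_of l) (cart_of u)" for y
  proof -
    have "of_cart y \<in> box l u \<longleftrightarrow>
        (\<forall>i. l \<bullet> Rep_basis_index i < y$i \<and> y$i < u \<bullet> Rep_basis_index i)"
      unfolding mem_box inner_of_cart_Rep_basis_index[symmetric]
      by (metis Rep_basis_index Rep_basis_index_cases)
    then show ?thesis by (simp add: mem_box_cart cart_of_def)
  qed
  then show ?thesis by auto
qed

lemma prod_Basis_cart: "(\<Prod>b\<in>(Basis :: (real^'n) set). x \<bullet> b) = (\<Prod>i\<in>UNIV. x$i)"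
  by (simp add: Basis_vec_def cart_eq_inner_axis axis_eq_axis prod.UNION_disjoint)

lemma lborel_distr_of_cart: "distr lborel borel of_cart = (lborel :: 'a::euclidean_space measure)"
proof (rule lborel_eqI[symmetric])
  fix l u :: 'a
  assume le: "\<And>b. b \<in> Basis \<Longrightarrow> l \<bullet> b \<le> u \<bullet> b"
  have "emeasure (distr lborel borel of_cart) (box l u) = emeasure lborel (box (cart_of l) (cart_of u))"
    using borel_measurable_linear[OF linear_of_cart] by (subst emeasure_distr) (auto simp: of_cart_vimage_box)
  also have "\<dots> = (\<Prod>b\<in>Basis. (cart_of u - cart_of l) \<bullet> b)"
    by (intro emeasure_lborel_box) (auto simp: Basis_vec_def cart_of_def inner_axis intro: le[OF Rep_basis_index])
  also have "\<dots> = (\<Prod>i\<in>UNIV. (cart_of u - cart_of l)$i)"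
    by (simp only: prod_Basis_cart)
  also have "\<dots> = (\<Prod>b\<in>Basis. (u - l) \<bullet> b)"
    using prod.reindex_bij_betw[OF bij_betw_Rep_basis_index, of "\<lambda>b. (u - l) \<bullet> b"]
    by (simp add: cart_of_def inner_diff_left)
  finally show "emeasure (distr lborel borel of_cart) (box l u) = (\<Prod>b\<in>Basis. (u - l) \<bullet> b)" .
qed simp

lemma lborel_distr_orthogonal_cart:
  fixes T :: "real^'n::{finite,wellorder} \<Rightarrow> real^'n::_"
  assumes T: "orthogonal_transformation T"
  shows "distr lborel borel T = lborel"
proof (rule lborel_eqI[symmetric])
  fix l u :: "real^'n::{finite,wellorder}"
  assume le: "\<And>b. b \<in> Basis \<Longrightarrow> l \<bullet> b \<le> u \<bullet> b"
  have T_borel: "T \<in> borel_measurable borel"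
    using T by (rule borel_measurable_orthogonal_transformation)
  have box: "box l u \<in> lmeasurable" by simp
  have vimage: "T -` box l u = inv T ` box l u"
    using orthogonal_transformation_bij[OF T] by (simp add: bij_vimage_eq_inv_image)
  have "emeasure (distr lborel borel T) (box l u) = emeasure lebesgue (T -` box l u)"
    using T_borel measurable_sets_borel[OF T_borel, of "box l u"] by (simp add: emeasure_distr)
  also have "\<dots> = measure lebesgue (inv T ` box l u)"
    unfolding vimage using measurable_orthogonal_image[OF orthogonal_transformation_inv[OF T] box]
    by (simp add: emeasure_eq_measure2)
  also have "\<dots> = emeasure lebesgue (box l u)"
    using box by (simp add: measure_orthogonal_image[OF orthogonal_transformation_inv[OF T] box]
        emeasure_eq_measure2)
  also have "\<dots> = (\<Prod>b\<in>Basis. (u - l) \<bullet> b)"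
    using le by simp
  finally show "emeasure (distr lborel borel T) (box l u) = (\<Prod>b\<in>Basis. (u - l) \<bullet> b)" .
qed simp

lemma lborel_distr_orthogonal:
  fixes T :: "'a::euclidean_space \<Rightarrow> 'a"
  assumes T: "orthogonal_transformation T"
  shows "distr lborel borel T = lborel"
proof -
  define T' where "T' = cart_of \<circ> T \<circ> of_cart"
  have "of_cart v \<bullet> of_cart w = v \<bullet> w" for v w
    using inner_cart_of[of "of_cart v" "of_cart w"] by simp
  then have "orthogonal_transformation T'"
    using T linear_cart_of linear_of_cart
    by (auto simp: orthogonal_transformation_def T'_def intro: linear_compose)
  then have T'_lborel: "distr lborel borel T' = lborel"
    by (rule lborel_distr_orthogonal_cart)
  have [measurable]: "T \<in> borel_measurable borel" "T' \<in> borel_measurable borel"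
    using T \<open>orthogonal_transformation T'\<close> by (simp_all add: borel_measurable_orthogonal_transformation)
  note borel_measurable_linear[OF linear_of_cart, measurable]
  have "distr lborel borel T = distr (distr lborel borel of_cart) borel T"
    by (simp add: lborel_distr_of_cart)
  also have "\<dots> = distr lborel borel (of_cart \<circ> T')"
    by (simp add: distr_distr T'_def o_def)
  also have "\<dots> = distr (distr lborel borel T') borel of_cart"
    by (simp add: distr_distr)
  finally show ?thesis
    by (simp add: T'_lborel lborel_distr_of_cart)
qed

section \<open>The uniform distribution on the sphere\<close>

abbreviation uniform_ball :: "'a::euclidean_space measure"
  where "uniform_ball \<equiv> uniform_measure lborel (ball 0 1)"

lemma prob_space_uniform_ball: "prob_space uniform_ball"
proof (rule prob_space_uniform_measure)
  have "measure lborel (ball (0::'a) 1) > 0"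
    by (rule content_ball_pos) simp
  then show "emeasure lborel (ball (0::'a) 1) \<noteq> 0" "emeasure lborel (ball (0::'a) 1) \<noteq> \<infinity>"
    using emeasure_lborel_ball_finite[of "0::'a" 1] by (auto simp: emeasure_eq_ennreal_measure)
qed

lemma unif_sphere_def': "unif_sphere = distr uniform_ball borel (\<lambda>v. v /\<^sub>R norm v)"
  by (simp add: unif_sphere_def)

lemma sets_unif_sphere [simp, measurable_cong]: "sets unif_sphere = sets borel"
  by (simp add: unif_sphere_def)

lemma space_unif_sphere [simp]: "space unif_sphere = UNIV"
  by (simp add: unif_sphere_def)

lemma prob_space_unif_sphere: "prob_space unif_sphere"
  unfolding unif_sphere_def' by (rule prob_space.prob_space_distr[OF prob_space_uniform_ball]) simp

lemma AE_unif_sphere_norm: "AE u in unif_sphere. norm u = 1"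
proof -
  have "AE v in lborel. v \<noteq> 0"
    by (rule AE_I'[of "{0}"]) auto
  then have "AE v in uniform_ball. norm (v /\<^sub>R norm v) = 1"
    by (intro AE_uniform_measureI) auto
  then show ?thesis
    unfolding unif_sphere_def' by (subst AE_distr_iff) auto
qed

lemma integral_norm_sq_unif_sphere: "(\<integral>u. (norm (u :: 'a::euclidean_space))\<^sup>2 \<partial>unif_sphere) = 1"
proof -
  have "AE u in unif_sphere. (norm (u :: 'a))\<^sup>2 = (1::real)"
    using AE_unif_sphere_norm by eventually_elim simp
  then have "(\<integral>u. (norm (u :: 'a))\<^sup>2 \<partial>unif_sphere) = (\<integral>u. 1 \<partial>(unif_sphere :: 'a measure))"
    by (intro integral_cong_AE) simp_all
  then show ?thesis
    using prob_space.prob_space[OF prob_space_unif_sphere] by simp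
qed

lemma uniform_ball_distr_orthogonal:
  fixes T :: "'a::euclidean_space \<Rightarrow> 'a"
  assumes T: "orthogonal_transformation T"
  shows "distr uniform_ball borel T = uniform_ball"
proof (rule measure_eqI)
  have T_borel [measurable]: "T \<in> borel_measurable borel"
    using T by (rule borel_measurable_orthogonal_transformation)
  fix A assume "A \<in> sets (distr uniform_ball borel T)"
  then have A [measurable]: "A \<in> sets borel" by simp
  have ball: "ball 0 1 \<inter> T -` A = T -` (ball 0 1 \<inter> A)"
    using orthogonal_transformation_norm[OF T] by auto
  have "emeasure (distr uniform_ball borel T) A = emeasure uniform_ball (T -` A)"
    by (simp add: emeasure_distr)
  also have "\<dots> = emeasure lborel (T -` (ball 0 1 \<inter> A)) / emeasure lborel (ball (0::'a) 1)"
    using measurable_sets_borel[OF T_borel A] by (simp add: ball)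
  also have "emeasure lborel (T -` (ball 0 1 \<inter> A)) = emeasure (distr lborel borel T) (ball 0 1 \<inter> A)"
    by (simp add: emeasure_distr)
  finally show "emeasure (distr uniform_ball borel T) A = emeasure uniform_ball A"
    by (simp add: lborel_distr_orthogonal[OF T])
qed simp

lemma unif_sphere_distr_orthogonal:
  fixes T :: "'a::euclidean_space \<Rightarrow> 'a"
  assumes T: "orthogonal_transformation T"
  shows "distr unif_sphere borel T = unif_sphere"
proof -
  have [measurable]: "T \<in> borel_measurable borel"
    using T by (rule borel_measurable_orthogonal_transformation)
  have "T \<circ> (\<lambda>v. v /\<^sub>R norm v) = (\<lambda>v. v /\<^sub>R norm v) \<circ> T"
    using T by (auto simp: orthogonal_transformation_scaleR orthogonal_transformation_norm)
  then have "distr unif_sphere borel T = distr (distr uniform_ball borel T) borel (\<lambda>v. v /\<^sub>R norm v)"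
    unfolding unif_sphere_def' by (simp add: distr_distr)
  then show ?thesis
    by (simp add: uniform_ball_distr_orthogonal[OF T] unif_sphere_def')
qed

lemma orthogonal_transformation_exists_unit:
  fixes a b :: "'a::real_inner"
  assumes "norm a = 1" "norm b = 1"
  obtains T where "orthogonal_transformation T" "T a = b"
proof (cases "a = b")
  case True
  then show ?thesis using that[of "\<lambda>x. x"] by simp
next
  case False
  define w where "w = a - b"
  define T where "T x = x - (2 * (x \<bullet> w) / (w \<bullet> w)) *\<^sub>R w" for x
  have "w \<noteq> 0"
    using False by (simp add: w_def)
  then have "w \<bullet> w \<noteq> 0"
    by simp
  moreover have "w \<bullet> w = 2 * (a \<bullet> w)"
    using assms by (simp add: w_def inner_diff_left inner_diff_right inner_commute norm_eq_1)
  ultimately have ww: "w \<bullet> w \<noteq> 0" "2 * (a \<bullet> w) / (w \<bullet> w) = 1"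
    by simp_all
  have "orthogonal_transformation T"
    unfolding orthogonal_transformation_def
  proof (intro conjI allI)
    show "linear T"
      unfolding T_def by (intro linearI) (auto simp: inner_add_left algebra_simps add_divide_distrib)
    show "T v \<bullet> T u = v \<bullet> u" for v u
      using ww by (simp add: T_def inner_diff_left inner_diff_right inner_commute field_simps power2_eq_square)
  qed
  moreover have "T a = b"
    unfolding T_def ww(2) by (simp add: w_def)
  ultimately show ?thesis by (rule that)
qed

lemma integral_abs_inner_unif_sphere:
  fixes a e :: "'a::euclidean_space"
  assumes e: "norm e = 1"
  shows "(\<integral>u. \<bar>a \<bullet> u\<bar> \<partial>unif_sphere) = norm a * (\<integral>u. \<bar>e \<bullet> u\<bar> \<partial>unif_sphere)"
proof (cases "a = 0")
  case False
  obtain T where T: "orthogonal_transformation T" and Te: "T e = a /\<^sub>R norm a"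
    using orthogonal_transformation_exists_unit[OF e, of "a /\<^sub>R norm a"] False by auto
  have [measurable]: "T \<in> borel_measurable borel"
    using T by (rule borel_measurable_orthogonal_transformation)
  have "(\<integral>u. \<bar>e \<bullet> u\<bar> \<partial>unif_sphere) = (\<integral>u. \<bar>T e \<bullet> T u\<bar> \<partial>unif_sphere)"
    using T by (simp add: orthogonal_transformation_def)
  also have "\<dots> = (\<integral>u. \<bar>T e \<bullet> u\<bar> \<partial>distr unif_sphere borel T)"
    by (simp add: integral_distr)
  also have "\<dots> = (\<integral>u. \<bar>a \<bullet> u\<bar> \<partial>unif_sphere) / norm a"
    by (simp add: unif_sphere_distr_orthogonal[OF T] Te abs_mult divide_inverse_commute)
  finally show ?thesis
    using False by (simp add: field_simps)
qed simp

lemma ball_near_unit_vector: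
  fixes e v :: "'a::real_inner"
  assumes e: "norm e = 1" and v: "v \<in> ball ((3/4) *\<^sub>R e) (1/4)"
  shows "norm v < 1" and "1/2 < e \<bullet> v"
proof -
  have d: "norm (v - (3/4) *\<^sub>R e) < 1/4"
    using v by (simp add: dist_norm norm_minus_commute)
  have "norm v \<le> norm (v - (3/4) *\<^sub>R e) + norm ((3/4) *\<^sub>R e)"
    by (metis norm_triangle_sub add.commute)
  then show "norm v < 1"
    using d e by simp
  have "\<bar>e \<bullet> (v - (3/4) *\<^sub>R e)\<bar> \<le> norm (v - (3/4) *\<^sub>R e)"
    using Cauchy_Schwarz_ineq2[of e "v - (3/4) *\<^sub>R e"] e by simp
  then show "1/2 < e \<bullet> v"
    using d e by (simp add: inner_diff_right norm_eq_1)
qed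

lemma integral_abs_inner_unif_sphere_pos:
  fixes e :: "'a::euclidean_space"
  assumes e: "norm e = 1"
  shows "(\<integral>u. \<bar>e \<bullet> u\<bar> \<partial>unif_sphere) > 0"
proof -
  interpret uniform_ball: prob_space "uniform_ball :: 'a measure"
    by (rule prob_space_uniform_ball)
  define S where "S = ball ((3/4) *\<^sub>R e) (1/4)"
  have S_cap: "norm v < 1 \<and> 1/2 < e \<bullet> v" if "v \<in> S" for v
    using ball_near_unit_vector[OF e] that unfolding S_def by blast
  have S_ball: "S \<subseteq> ball 0 1"
    using S_cap by auto
  have cap_bound: "indicator S v / 2 \<le> \<bar>e \<bullet> (v /\<^sub>R norm v)\<bar>" for v
  proof (cases "v \<in> S")
    case True
    then have "norm v < 1" "1/2 < e \<bullet> v"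
      using S_cap by auto
    moreover from \<open>1/2 < e \<bullet> v\<close> have "v \<noteq> 0"
      by auto
    ultimately have "1/2 \<le> (e \<bullet> v) / norm v"
      by (simp add: le_divide_eq)
    also have "\<dots> = e \<bullet> (v /\<^sub>R norm v)"
      by (simp add: divide_inverse_commute)
    also have "\<dots> \<le> \<bar>e \<bullet> (v /\<^sub>R norm v)\<bar>"
      by (rule abs_ge_self)
    finally show ?thesis
      using True by simp
qed simp
  have "0 < measure lborel S / measure lborel (ball (0::'a) 1) / 2"
    unfolding S_def by (simp add: content_ball_pos)
  also have "\<dots> = (\<integral>v. indicator S v / 2 \<partial>uniform_ball)"
    using S_ball emeasure_lborel_ball_finite[of "0::'a" 1]
    by (simp add: Int_absorb1 emeasure_eq_ennreal_measure S_def)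
  also have "\<dots> \<le> (\<integral>v. \<bar>e \<bullet> (v /\<^sub>R norm v)\<bar> \<partial>uniform_ball)"
  proof (rule integral_mono[OF _ _ cap_bound])
    show "integrable uniform_ball (\<lambda>v. indicator S v / 2 :: real)"
      by (rule uniform_ball.integrable_const_bound[where B=1]) (auto simp: indicator_def S_def)
    have "\<bar>e \<bullet> (v /\<^sub>R norm v)\<bar> \<le> 1" for v
      using Cauchy_Schwarz_ineq2[of e "v /\<^sub>R norm v"] e by (cases "v = 0") simp_all
    then show "integrable uniform_ball (\<lambda>v. \<bar>e \<bullet> (v /\<^sub>R norm v)\<bar>)"
      by (intro uniform_ball.integrable_const_bound[where B=1]) auto
  qed
  also have "\<dots> = (\<integral>u. \<bar>e \<bullet> u\<bar> \<partial>unif_sphere)"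
    unfolding unif_sphere_def' by (simp add: integral_distr)
  finally show ?thesis .
qed

lemma norm_first_basis: "norm (first_basis :: 'a::euclidean_space) = 1"
  unfolding first_basis_def using nonempty_Basis by (metis ex_in_conv someI_ex norm_Basis)

section \<open>Joint measurability of Caratheodory functions\<close>

definition grid_round :: "nat \<Rightarrow> 'a::euclidean_space \<Rightarrow> 'a"
  where "grid_round n y = (\<Sum>b\<in>Basis. (\<lfloor>real (Suc n) * (y \<bullet> b)\<rfloor> / real (Suc n)) *\<^sub>R b)"

lemma borel_measurable_grid_round [measurable]: "grid_round n \<in> borel_measurable borel"
  unfolding grid_round_def by measurable

lemma LIMSEQ_floor_mult_divide: "(\<lambda>n. \<lfloor>real (Suc n) * t\<rfloor> / real (Suc n)) \<longlonglongrightarrow> t"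
proof (rule tendsto_sandwich[of "\<lambda>n. t - 1 / real (Suc n)" _ _ "\<lambda>n. t"])
  show "\<forall>\<^sub>F n in sequentially. t - 1 / real (Suc n) \<le> \<lfloor>real (Suc n) * t\<rfloor> / real (Suc n)"
  proof (intro always_eventually allI)
    fix n
    have "real (Suc n) * t - 1 \<le> \<lfloor>real (Suc n) * t\<rfloor>"
      by linarith
    then have "(real (Suc n) * t - 1) / real (Suc n) \<le> \<lfloor>real (Suc n) * t\<rfloor> / real (Suc n)"
      by (rule divide_right_mono) simp
    then show "t - 1 / real (Suc n) \<le> \<lfloor>real (Suc n) * t\<rfloor> / real (Suc n)"
      by (simp add: diff_divide_distrib)
  qed
  show "\<forall>\<^sub>F n in sequentially. \<lfloor>real (Suc n) * t\<rfloor> / real (Suc n) \<le> t"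
    by (intro always_eventually allI) (simp add: field_simps)
  show "(\<lambda>n. t - 1 / real (Suc n)) \<longlonglongrightarrow> t"
    using tendsto_diff[OF tendsto_const LIMSEQ_Suc[OF lim_1_over_n], of t] by simp
qed simp

lemma LIMSEQ_grid_round: "(\<lambda>n. grid_round n y) \<longlonglongrightarrow> y"
proof -
  have "(\<lambda>n. grid_round n y) \<longlonglongrightarrow> (\<Sum>b\<in>Basis. (y \<bullet> b) *\<^sub>R b)"
    unfolding grid_round_def by (intro tendsto_sum tendsto_scaleR LIMSEQ_floor_mult_divide tendsto_const)
  then show ?thesis by (simp add: euclidean_representation)
qed

lemma countable_range_grid_round: "countable (range (grid_round n :: 'a::euclidean_space \<Rightarrow> 'a))"
proof (rule countable_subset)
  define Q :: "('a \<Rightarrow> int) \<Rightarrow> 'a"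
    where "Q k = (\<Sum>b\<in>Basis. (k b / real (Suc n)) *\<^sub>R b)" for k
  show "range (grid_round n) \<subseteq> Q ` (Basis \<rightarrow>\<^sub>E UNIV)"
  proof clarify
    fix y :: 'a
    have "grid_round n y = Q (restrict (\<lambda>b. \<lfloor>real (Suc n) * (y \<bullet> b)\<rfloor>) Basis)"
      unfolding grid_round_def Q_def by (intro sum.cong) auto
    then show "grid_round n y \<in> Q ` (Basis \<rightarrow>\<^sub>E UNIV)"
      by auto
  qed
  show "countable (Q ` (Basis \<rightarrow>\<^sub>E (UNIV :: int set)))"
    by (intro countable_image countable_PiE) auto
qed

text \<open>A function continuous in its first argument is the pointwise limit of its compositions
  with the grid roundings, and each of these is measurable since the grid is countable.\<close>
lemma borel_measurable_caratheodory:
  fixes h :: "'a::euclidean_space \<Rightarrow> 'b \<Rightarrow> real"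
  assumes cont: "\<And>\<xi>. continuous_on UNIV (\<lambda>y. h y \<xi>)"
    and meas: "\<And>y. h y \<in> borel_measurable M"
  shows "(\<lambda>(y, \<xi>). h y \<xi>) \<in> borel_measurable (borel \<Otimes>\<^sub>M M)"
proof (rule borel_measurable_LIMSEQ_real)
  fix p :: "'a \<times> 'b"
  have "isCont (\<lambda>y. h y (snd p)) (fst p)"
    using cont[of "snd p"] by (simp add: continuous_on_eq_continuous_at)
  then show "(\<lambda>n. h (grid_round n (fst p)) (snd p)) \<longlonglongrightarrow> (case p of (y, \<xi>) \<Rightarrow> h y \<xi>)"
    by (auto simp: split_beta intro: isCont_tendsto_compose LIMSEQ_grid_round)
next
  fix n
  have grid_countable: "(\<lambda>p. grid_round n (fst p)) \<in> borel \<Otimes>\<^sub>M M \<rightarrow>\<^sub>M count_space (range (grid_round n))"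
  proof (subst measurable_count_space_eq_countable[OF countable_range_grid_round], intro conjI ballI)
    fix a
    have "(\<lambda>p. grid_round n (fst p)) \<in> borel_measurable (borel \<Otimes>\<^sub>M M)"
      by measurable
    then show "(\<lambda>p. grid_round n (fst p)) -` {a} \<inter> space (borel \<Otimes>\<^sub>M M) \<in> sets (borel \<Otimes>\<^sub>M M)"
      by (rule measurable_sets) simp
  qed auto
  show "(\<lambda>p. h (grid_round n (fst p)) (snd p)) \<in> borel_measurable (borel \<Otimes>\<^sub>M M)"
    by (rule measurable_compose_countable'[OF _ grid_countable countable_range_grid_round])
      (rule measurable_compose[OF measurable_snd meas])
qed

section \<open>Smooth functions and their expectations\<close>

lemma lipschitz_gradient_quadratic_upper_bound:
  fixes \<phi> :: "'a::real_inner \<Rightarrow> real"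
  assumes der: "\<And>y. (\<phi> has_derivative (\<lambda>h. G y \<bullet> h)) (at y)"
    and lip: "\<And>y z. norm (G z - G y) \<le> L * norm (z - y)"
  shows "\<phi> (y + h) - \<phi> y - G y \<bullet> h \<le> L / 2 * (norm h)\<^sup>2"
proof -
  define \<psi> where "\<psi> t = \<phi> (y + t *\<^sub>R h) - t * (G y \<bullet> h) - L / 2 * t\<^sup>2 * (norm h)\<^sup>2" for t
  have "(\<psi> has_real_derivative G (y + t *\<^sub>R h) \<bullet> h - G y \<bullet> h - L * t * (norm h)\<^sup>2) (at t)" for t
  proof -
    have "((\<lambda>t. \<phi> (y + t *\<^sub>R h)) has_derivative (\<lambda>s. G (y + t *\<^sub>R h) \<bullet> (s *\<^sub>R h))) (at t)"
      by (rule has_derivative_compose[OF _ der]) (auto intro!: derivative_eq_intros)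
    moreover have "(\<lambda>s. G (y + t *\<^sub>R h) \<bullet> (s *\<^sub>R h)) = (*) (G (y + t *\<^sub>R h) \<bullet> h)"
      by (auto simp: mult.commute)
    ultimately have "((\<lambda>t. \<phi> (y + t *\<^sub>R h)) has_real_derivative G (y + t *\<^sub>R h) \<bullet> h) (at t)"
      by (simp add: has_field_derivative_def)
    then show ?thesis
      unfolding \<psi>_def by (auto intro!: derivative_eq_intros simp: power2_eq_square)
  qed
  moreover have "G (y + t *\<^sub>R h) \<bullet> h - G y \<bullet> h \<le> L * t * (norm h)\<^sup>2" if "0 \<le> t" for t
  proof -
    have "G (y + t *\<^sub>R h) \<bullet> h - G y \<bullet> h \<le> norm (G (y + t *\<^sub>R h) - G y) * norm h"
      using Cauchy_Schwarz_ineq2[of "G (y + t *\<^sub>R h) - G y" h] by (simp add: inner_diff_left)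
    also have "\<dots> \<le> L * norm (t *\<^sub>R h) * norm h"
      using lip[of y "y + t *\<^sub>R h"] by (intro mult_right_mono) (simp_all add: norm_minus_commute)
    finally show ?thesis
      using that by (simp add: power2_eq_square mult.assoc)
  qed
  ultimately have "\<psi> 1 \<le> \<psi> 0"
    by (intro DERIV_nonpos_imp_nonincreasing[of 0 1 \<psi>]) (auto intro!: exI)
  then show ?thesis
    by (simp add: \<psi>_def)
qed

lemma lipschitz_gradient_taylor_bound:
  fixes \<phi> :: "'a::real_inner \<Rightarrow> real"
  assumes der: "\<And>y. (\<phi> has_derivative (\<lambda>h. G y \<bullet> h)) (at y)"
    and lip: "\<And>y z. norm (G z - G y) \<le> L * norm (z - y)"
  shows "\<bar>\<phi> (y + h) - \<phi> y - G y \<bullet> h\<bar> \<le> L / 2 * (norm h)\<^sup>2"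
proof (rule abs_leI)
  show "\<phi> (y + h) - \<phi> y - G y \<bullet> h \<le> L / 2 * (norm h)\<^sup>2"
    by (rule lipschitz_gradient_quadratic_upper_bound[OF der lip])
  have "(\<lambda>y. - \<phi> y) (y + h) - (- \<phi> y) - (- G y) \<bullet> h \<le> L / 2 * (norm h)\<^sup>2"
  proof (rule lipschitz_gradient_quadratic_upper_bound[of _ "\<lambda>y. - G y"])
    show "((\<lambda>y. - \<phi> y) has_derivative (\<lambda>h. - G z \<bullet> h)) (at z)" for z
      unfolding inner_minus_left by (rule has_derivative_minus[OF der])
    show "norm (- G z - - G w) \<le> L * norm (z - w)" for w z
      unfolding minus_diff_minus norm_minus_cancel by (rule lip)
  qed
  then show "- (\<phi> (y + h) - \<phi> y - G y \<bullet> h) \<le> L / 2 * (norm h)\<^sup>2"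
    by simp
qed

lemma (in prob_space) integral_lipschitz:
  fixes g :: "'c::real_normed_vector \<Rightarrow> 'a \<Rightarrow> 'd::{banach, second_countable_topology}"
  assumes "\<And>y. integrable M (g y)"
    and "\<And>y z \<xi>. norm (g z \<xi> - g y \<xi>) \<le> L * norm (z - y)"
  shows "norm ((\<integral>\<xi>. g z \<xi> \<partial>M) - (\<integral>\<xi>. g y \<xi> \<partial>M)) \<le> L * norm (z - y)"
proof -
  have "norm ((\<integral>\<xi>. g z \<xi> \<partial>M) - (\<integral>\<xi>. g y \<xi> \<partial>M)) = norm (\<integral>\<xi>. g z \<xi> - g y \<xi> \<partial>M)"
    using assms(1) by simp
  also have "\<dots> \<le> (\<integral>\<xi>. norm (g z \<xi> - g y \<xi>) \<partial>M)"
    by (rule integral_norm_bound)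
  also have "\<dots> \<le> (\<integral>\<xi>. L * norm (z - y) \<partial>M)"
    using assms by (intro integral_mono) auto
  finally show ?thesis
    by (simp add: prob_space)
qed

lemma (in prob_space) taylor_bound_of_hessian_bound:
  fixes gradf :: "'c::euclidean_space \<Rightarrow> 'a \<Rightarrow> 'c" and F :: "'c \<Rightarrow> real"
  assumes hessian: "\<And>y \<xi>. ((\<lambda>z. gradf z \<xi>) has_derivative blinfun_apply (H y \<xi>)) (at y)"
    and hessian_bound: "\<And>y \<xi>. norm (H y \<xi>) \<le> L"
    and gradf_measurable: "\<And>y. gradf y \<in> borel_measurable M"
    and gradf_sq: "\<And>y. integrable M (\<lambda>\<xi>. (norm (gradf y \<xi>))\<^sup>2)"
    and F_gradient: "\<And>y. (F has_derivative (\<lambda>h. (\<integral>\<xi>. gradf y \<xi> \<partial>M) \<bullet> h)) (at y)"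
  shows "\<bar>F (y + h) - F y - (\<integral>\<xi>. gradf y \<xi> \<partial>M) \<bullet> h\<bar> \<le> L / 2 * (norm h)\<^sup>2"
proof (rule lipschitz_gradient_taylor_bound[OF F_gradient integral_lipschitz])
  show "integrable M (gradf y)" for y
    using square_integrable_imp_integrable[OF _ gradf_sq[of y]] gradf_measurable[of y]
    by (simp add: integrable_norm_iff)
  show "norm (gradf z \<xi> - gradf y \<xi>) \<le> L * norm (z - y)" for z y \<xi>
    using hessian hessian_bound by (intro differentiable_bound[of UNIV]) (auto simp: norm_blinfun.rep_eq)
qed

lemma (in prob_space) integral_abs_deviation_le:
  fixes X :: "'a \<Rightarrow> real"
  assumes X [measurable]: "X \<in> borel_measurable M" and X2: "integrable M (\<lambda>\<xi>. (X \<xi>)\<^sup>2)"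
    and var: "(\<integral>\<xi>. (X \<xi>)\<^sup>2 \<partial>M) - (\<integral>\<xi>. X \<xi> \<partial>M)\<^sup>2 \<le> s\<^sup>2" and "0 \<le> s"
  shows "integrable M (\<lambda>\<xi>. \<bar>X \<xi> - expectation X\<bar>)"
    and "(\<integral>\<xi>. \<bar>X \<xi> - expectation X\<bar> \<partial>M) \<le> s"
proof -
  define Y where "Y \<xi> = \<bar>X \<xi> - expectation X\<bar>" for \<xi>
  have X1: "integrable M X"
    by (rule square_integrable_imp_integrable[OF X X2])
  then show Y1: "integrable M Y"
    unfolding Y_def by (intro integrable_abs Bochner_Integration.integrable_diff) simp_all
  have "(\<lambda>\<xi>. (Y \<xi>)\<^sup>2) = (\<lambda>\<xi>. (X \<xi>)\<^sup>2 - 2 * expectation X * X \<xi> + (expectation X)\<^sup>2)"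
    by (auto simp: Y_def power2_eq_square algebra_simps)
  then have Y2: "integrable M (\<lambda>\<xi>. (Y \<xi>)\<^sup>2)"
    using X1 X2 by simp
  have "0 \<le> variance Y"
    by (simp add: integral_nonneg_AE)
  also have "variance Y = expectation (\<lambda>\<xi>. (Y \<xi>)\<^sup>2) - (expectation Y)\<^sup>2"
    using Y1 Y2 by (rule variance_eq)
  also have "expectation (\<lambda>\<xi>. (Y \<xi>)\<^sup>2) = variance X"
    unfolding Y_def power2_abs ..
  also have "variance X = (\<integral>\<xi>. (X \<xi>)\<^sup>2 \<partial>M) - (expectation X)\<^sup>2"
    using X1 X2 by (rule variance_eq)
  finally have "(expectation Y)\<^sup>2 \<le> s\<^sup>2"
    using var by linarith
  then show "expectation Y \<le> s"
    using \<open>0 \<le> s\<close> by (rule power2_le_imp_le)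
qed

lemma taylor_bound_step:
  assumes "\<And>h. \<bar>F (x + h) - F x - G \<bullet> h\<bar> \<le> L / 2 * (norm h)\<^sup>2"
  shows "\<bar>F (x - \<eta> *\<^sub>R v) - (F x - \<eta> * (G \<bullet> v))\<bar> \<le> L / 2 * \<eta>\<^sup>2 * (norm v)\<^sup>2"
proof -
  have "x + - (\<eta> *\<^sub>R v) = x - \<eta> *\<^sub>R v" "G \<bullet> - (\<eta> *\<^sub>R v) = - (\<eta> * (G \<bullet> v))"
    "L / 2 * (norm (- (\<eta> *\<^sub>R v)))\<^sup>2 = L / 2 * \<eta>\<^sup>2 * (norm v)\<^sup>2"
    by (simp_all add: power_mult_distrib)
  then show ?thesis
    using assms[of "- (\<eta> *\<^sub>R v)"] by (simp only: diff_minus_eq_add)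
qed

lemma integral_descent_step_le:
  fixes F :: "'a::euclidean_space \<Rightarrow> real" and g :: "'b \<Rightarrow> 'a"
  assumes P: "prob_space P"
    and F [measurable]: "F \<in> borel_measurable borel"
    and g [measurable]: "g \<in> borel_measurable P"
    and g_bounded: "AE \<omega> in P. norm (g \<omega>) \<le> R"
    and taylor: "\<And>h. \<bar>F (x + h) - F x - G \<bullet> h\<bar> \<le> L / 2 * (norm h)\<^sup>2"
  shows "(\<integral>\<omega>. F (x - \<eta> *\<^sub>R g \<omega>) \<partial>P)
      \<le> F x - \<eta> * (\<integral>\<omega>. G \<bullet> g \<omega> \<partial>P) + L / 2 * \<eta>\<^sup>2 * (\<integral>\<omega>. (norm (g \<omega>))\<^sup>2 \<partial>P)"
proof -
  interpret prob_space P by (rule P)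
  have taylor_step: "\<bar>F (x - \<eta> *\<^sub>R g \<omega>) - (F x - \<eta> * (G \<bullet> g \<omega>))\<bar> \<le> L / 2 * \<eta>\<^sup>2 * (norm (g \<omega>))\<^sup>2" for \<omega>
    by (rule taylor_bound_step[OF taylor])
  have taylor_step': "F (x - \<eta> *\<^sub>R g \<omega>) \<le> F x - \<eta> * (G \<bullet> g \<omega>) + L / 2 * \<eta>\<^sup>2 * (norm (g \<omega>))\<^sup>2"
    "\<bar>F (x - \<eta> *\<^sub>R g \<omega>)\<bar> \<le> \<bar>F x\<bar> + \<bar>\<eta> * (G \<bullet> g \<omega>)\<bar> + L / 2 * \<eta>\<^sup>2 * (norm (g \<omega>))\<^sup>2" for \<omega>
    using taylor_step[of \<omega>] by (simp_all only: abs_le_iff) linarith+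
  have inner_bound: "\<bar>G \<bullet> g \<omega>\<bar> \<le> norm G * R" if "norm (g \<omega>) \<le> R" for \<omega>
    using Cauchy_Schwarz_ineq2[of G "g \<omega>"] mult_left_mono[OF that norm_ge_zero[of G]] by linarith
  have sq_bound: "(norm (g \<omega>))\<^sup>2 \<le> R\<^sup>2" if "norm (g \<omega>) \<le> R" for \<omega>
    using that by (simp add: power_mono)
  have int_inner: "integrable P (\<lambda>\<omega>. G \<bullet> g \<omega>)"
    by (rule integrable_const_bound[where B = "norm G * R"])
      (use g_bounded inner_bound in \<open>auto elim: eventually_mono\<close>)
  have int_sq: "integrable P (\<lambda>\<omega>. (norm (g \<omega>))\<^sup>2)"
    by (rule integrable_const_bound[where B = "R\<^sup>2"])
      (use g_bounded sq_bound in \<open>auto elim: eventually_mono\<close>)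
  have int_F: "integrable P (\<lambda>\<omega>. F (x - \<eta> *\<^sub>R g \<omega>))"
  proof (rule integrable_const_bound[where B = "\<bar>F x\<bar> + \<bar>\<eta>\<bar> * (norm G * R) + \<bar>L\<bar> / 2 * \<eta>\<^sup>2 * R\<^sup>2"])
    show "AE \<omega> in P. norm (F (x - \<eta> *\<^sub>R g \<omega>)) \<le> \<bar>F x\<bar> + \<bar>\<eta>\<bar> * (norm G * R) + \<bar>L\<bar> / 2 * \<eta>\<^sup>2 * R\<^sup>2"
      using g_bounded
    proof eventually_elim
      case (elim \<omega>)
      have "\<bar>\<eta> * (G \<bullet> g \<omega>)\<bar> \<le> \<bar>\<eta>\<bar> * (norm G * R)"
        using inner_bound[OF elim] by (simp add: abs_mult mult_left_mono)
      moreover have "L / 2 * \<eta>\<^sup>2 * (norm (g \<omega>))\<^sup>2 \<le> \<bar>L\<bar> / 2 * \<eta>\<^sup>2 * R\<^sup>2"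
        using sq_bound[OF elim] by (intro mult_mono) auto
      ultimately show ?case
        using taylor_step'(2)[of \<omega>] by (simp only: real_norm_def)
    qed
  qed simp
  have "(\<integral>\<omega>. F (x - \<eta> *\<^sub>R g \<omega>) \<partial>P) \<le> (\<integral>\<omega>. F x - \<eta> * (G \<bullet> g \<omega>) + L / 2 * \<eta>\<^sup>2 * (norm (g \<omega>))\<^sup>2 \<partial>P)"
    using int_F int_inner int_sq taylor_step'(1) by (intro integral_mono) auto
  also have "\<dots> = F x - \<eta> * (\<integral>\<omega>. G \<bullet> g \<omega> \<partial>P) + L / 2 * \<eta>\<^sup>2 * (\<integral>\<omega>. (norm (g \<omega>))\<^sup>2 \<partial>P)"
    using int_inner int_sq by (simp add: prob_space)
  finally show ?thesis .
qed

section \<open>The sign-comparison gradient estimator\<close>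

definition sign_grad_estimator ::
    "('a::euclidean_space \<Rightarrow> 'b \<Rightarrow> real) \<Rightarrow> real \<Rightarrow> real \<Rightarrow> 'a \<Rightarrow> 'a \<times> 'b \<times> 'b \<Rightarrow> 'a"
  where "sign_grad_estimator f s0 \<delta> x = (\<lambda>(u, \<xi>, \<zeta>).
    (real DIM('a) / \<delta> * sgn_with s0 (f (x + \<delta> *\<^sub>R u) \<xi> - f x \<zeta>)) *\<^sub>R u)"

lemma borel_measurable_sgn_with [measurable]: "sgn_with s0 \<in> borel_measurable borel"
  unfolding sgn_with_def[abs_def] by measurable

lemma measurable_fst_unif_sphere [measurable]: "fst \<in> unif_sphere \<Otimes>\<^sub>M N \<rightarrow>\<^sub>M borel"
  using measurable_fst[of unif_sphere N] unfolding measurable_cong_sets[OF refl sets_unif_sphere] .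

lemma abs_sgn_with: "s0 \<in> {1, -1} \<Longrightarrow> \<bar>sgn_with s0 t\<bar> = 1"
  by (auto simp: sgn_with_def)

lemma sgn_with_mult_ge: "s0 \<in> {1, -1} \<Longrightarrow> \<bar>p\<bar> - 2 * \<bar>q\<bar> \<le> sgn_with s0 (p + q) * p"
  by (auto simp: sgn_with_def abs_if)

lemma norm_sign_grad_estimator:
  assumes "s0 \<in> {1, -1}" "\<delta> > 0"
  shows "norm (sign_grad_estimator f s0 \<delta> x (u, \<xi>, \<zeta>)) = real DIM('a) / \<delta> * norm (u :: 'a::euclidean_space)"
  using assms by (simp add: sign_grad_estimator_def abs_mult abs_sgn_with)

lemma (in prob_space) AE_pair_fst:
  assumes [measurable]: "Measurable.pred N P" and "AE u in N. P u"
  shows "AE z in N \<Otimes>\<^sub>M M. P (fst z)"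
proof -
  have "AE u in distr (N \<Otimes>\<^sub>M M) N fst. P u"
    unfolding distr_pair_fst by fact
  then show ?thesis
    by (subst (asm) AE_distr_iff) auto
qed

lemma (in prob_space) integral_pair_fst:
  fixes k :: "'b \<Rightarrow> real"
  assumes [measurable]: "k \<in> borel_measurable N"
  shows "(\<integral>z. k (fst z) \<partial>(N \<Otimes>\<^sub>M M)) = (\<integral>u. k u \<partial>N)"
proof -
  have "(\<integral>z. k (fst z) \<partial>(N \<Otimes>\<^sub>M M)) = (\<integral>u. k u \<partial>distr (N \<Otimes>\<^sub>M M) N fst)"
    by (simp add: integral_distr)
  then show ?thesis
    by (simp add: distr_pair_fst)
qed

lemma integral_norm_sign_grad_estimator_sq:
  fixes f :: "'a::euclidean_space \<Rightarrow> 'b \<Rightarrow> real"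
  assumes M: "prob_space M" and "s0 \<in> {1, -1}" "\<delta> > 0"
  shows "(\<integral>\<omega>. (norm (sign_grad_estimator f s0 \<delta> x \<omega>))\<^sup>2 \<partial>(unif_sphere \<Otimes>\<^sub>M (M \<Otimes>\<^sub>M M)))
    = (real DIM('a))\<^sup>2 / \<delta>\<^sup>2"
proof -
  let ?P = "unif_sphere \<Otimes>\<^sub>M (M \<Otimes>\<^sub>M M) :: ('a \<times> 'b \<times> 'b) measure"
  interpret MM: prob_space "M \<Otimes>\<^sub>M M"
    by (intro prob_space_pair M)
  have sphere: "(\<integral>\<omega>. (norm (fst \<omega>))\<^sup>2 \<partial>?P) = 1"
    by (subst MM.integral_pair_fst) (simp_all add: integral_norm_sq_unif_sphere)
  have "(norm (sign_grad_estimator f s0 \<delta> x \<omega>))\<^sup>2 = (real DIM('a) / \<delta>)\<^sup>2 * (norm (fst \<omega>))\<^sup>2" for \<omega>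
    by (cases \<omega>) (simp add: norm_sign_grad_estimator[OF assms(2,3)] power_mult_distrib power_divide)
  then show ?thesis
    using sphere by (simp add: power_divide)
qed

lemma inner_sign_grad_estimator_ge:
  fixes f :: "'a::euclidean_space \<Rightarrow> 'b \<Rightarrow> real"
  assumes s0: "s0 \<in> {1, -1}" and \<delta>: "\<delta> > 0"
    and taylor: "\<bar>F (x + \<delta> *\<^sub>R u) - F x - \<delta> * (G \<bullet> u)\<bar> \<le> r"
  shows "real DIM('a) / \<delta> * \<bar>G \<bullet> u\<bar>
      - 2 * real DIM('a) / \<delta>\<^sup>2 * (\<bar>f (x + \<delta> *\<^sub>R u) \<xi> - F (x + \<delta> *\<^sub>R u)\<bar> + \<bar>f x \<zeta> - F x\<bar> + r)
    \<le> G \<bullet> sign_grad_estimator f s0 \<delta> x (u, \<xi>, \<zeta>)"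
proof -
  define p where "p = \<delta> * (G \<bullet> u)"
  define q where "q = f (x + \<delta> *\<^sub>R u) \<xi> - f x \<zeta> - p"
  define e where "e = \<bar>f (x + \<delta> *\<^sub>R u) \<xi> - F (x + \<delta> *\<^sub>R u)\<bar> + \<bar>f x \<zeta> - F x\<bar> + r"
  have "\<bar>q\<bar> \<le> e"
    using taylor unfolding q_def p_def e_def by linarith
  then have "\<bar>p\<bar> - 2 * e \<le> sgn_with s0 (p + q) * p"
    using sgn_with_mult_ge[OF s0, of p q] by linarith
  from mult_left_mono[OF this, of "real DIM('a) / \<delta>\<^sup>2"] show ?thesis
    using \<delta> by (simp add: sign_grad_estimator_def p_def q_def e_def abs_mult power2_eq_square field_simps)
qed

lemma nn_integral_pair_le:
  assumes N: "prob_space N" and M: "sigma_finite_measure M"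
    and h [measurable]: "h \<in> borel_measurable (N \<Otimes>\<^sub>M M)"
    and section_le: "\<And>u. u \<in> space N \<Longrightarrow> (\<integral>\<^sup>+v. h (u, v) \<partial>M) \<le> c"
  shows "(\<integral>\<^sup>+z. h z \<partial>(N \<Otimes>\<^sub>M M)) \<le> c"
proof -
  interpret M: sigma_finite_measure M by (rule M)
  interpret N: prob_space N by (rule N)
  have "(\<integral>\<^sup>+z. h z \<partial>(N \<Otimes>\<^sub>M M)) = (\<integral>\<^sup>+u. \<integral>\<^sup>+v. h (u, v) \<partial>M \<partial>N)"
    by (rule M.nn_integral_fst[symmetric]) measurable
  also have "\<dots> \<le> (\<integral>\<^sup>+u. c \<partial>N)"
    using section_le by (intro nn_integral_mono) auto
  finally show ?thesis
    by (simp add: N.emeasure_space_1)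
qed

locale noisy_smooth_objective = prob_space M
  for M :: "'b measure" and f :: "'a::euclidean_space \<Rightarrow> 'b \<Rightarrow> real"
    and F :: "'a \<Rightarrow> real" and G :: "'a \<Rightarrow> 'a" and L \<sigma>f :: real +
  assumes f_continuous: "\<And>\<xi>. continuous_on UNIV (\<lambda>y. f y \<xi>)"
    and f_measurable: "\<And>y. f y \<in> borel_measurable M"
    and F_measurable [measurable]: "F \<in> borel_measurable borel"
    and F_taylor: "\<And>y h. \<bar>F (y + h) - F y - G y \<bullet> h\<bar> \<le> L / 2 * (norm h)\<^sup>2"
    and integrable_abs_deviation: "\<And>y. integrable M (\<lambda>\<xi>. \<bar>f y \<xi> - F y\<bar>)"
    and integral_abs_deviation_le: "\<And>y. (\<integral>\<xi>. \<bar>f y \<xi> - F y\<bar> \<partial>M) \<le> \<sigma>f"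
begin

abbreviation sample_measure :: "('a \<times> 'b \<times> 'b) measure"
  where "sample_measure \<equiv> unif_sphere \<Otimes>\<^sub>M (M \<Otimes>\<^sub>M M)"

lemma prob_space_sample_measure: "prob_space sample_measure"
  by (intro prob_space_pair prob_space_unif_sphere prob_space_axioms)

lemma measurable_f_compose [measurable]:
  assumes [measurable]: "y \<in> N \<rightarrow>\<^sub>M borel" "\<xi> \<in> N \<rightarrow>\<^sub>M M"
  shows "(\<lambda>\<omega>. f (y \<omega>) (\<xi> \<omega>)) \<in> borel_measurable N"
  using measurable_compose[OF measurable_Pair[OF assms]
      borel_measurable_caratheodory[OF f_continuous f_measurable]] by simp

lemma measurable_sign_grad_estimator [measurable]:
  "sign_grad_estimator f s0 \<delta> x \<in> borel_measurable sample_measure"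
  unfolding sign_grad_estimator_def split_beta' by measurable

lemma sigma_f_nonneg: "0 \<le> \<sigma>f"
proof -
  have "0 \<le> (\<integral>\<xi>. \<bar>f 0 \<xi> - F 0\<bar> \<partial>M)"
    by simp
  then show ?thesis
    using integral_abs_deviation_le[of 0] by linarith
qed

lemma nn_integral_abs_deviation_le: "(\<integral>\<^sup>+\<xi>. ennreal \<bar>f y \<xi> - F y\<bar> \<partial>M) \<le> ennreal \<sigma>f"
  using integrable_abs_deviation[of y] integral_abs_deviation_le[of y]
  by (simp add: nn_integral_eq_integral ennreal_leI)

definition sample_deviation :: "'a \<Rightarrow> real \<Rightarrow> 'a \<times> 'b \<times> 'b \<Rightarrow> real"
  where "sample_deviation x \<delta> = (\<lambda>(u, \<xi>, \<zeta>).
    \<bar>f (x + \<delta> *\<^sub>R u) \<xi> - F (x + \<delta> *\<^sub>R u)\<bar> + \<bar>f x \<zeta> - F x\<bar>)"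

lemma sample_deviation_nonneg: "0 \<le> sample_deviation x \<delta> \<omega>"
  by (auto simp: sample_deviation_def split_beta)

lemma measurable_sample_deviation [measurable]:
  "sample_deviation x \<delta> \<in> borel_measurable sample_measure"
  unfolding sample_deviation_def split_beta' by measurable

lemma integral_sample_deviation_le:
  shows "integrable sample_measure (sample_deviation x \<delta>)"
    and "(\<integral>\<omega>. sample_deviation x \<delta> \<omega> \<partial>sample_measure) \<le> 2 * \<sigma>f"
proof -
  let ?E = "sample_deviation x \<delta>"
  interpret MM: prob_space "M \<Otimes>\<^sub>M M"
    by (intro prob_space_pair prob_space_axioms)
  have "(\<integral>\<^sup>+\<omega>. ennreal (?E \<omega>) \<partial>sample_measure) \<le> ennreal \<sigma>f + ennreal \<sigma>f"
  proof (rule nn_integral_pair_le[OF prob_space_unif_sphere MM.sigma_finite_measure_axioms])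
    fix u
    have "(\<integral>\<^sup>+v. ennreal (?E (u, v)) \<partial>(M \<Otimes>\<^sub>M M))
        = (\<integral>\<^sup>+\<xi>. \<integral>\<^sup>+\<zeta>. ennreal \<bar>f (x + \<delta> *\<^sub>R u) \<xi> - F (x + \<delta> *\<^sub>R u)\<bar> + ennreal \<bar>f x \<zeta> - F x\<bar> \<partial>M \<partial>M)"
      by (subst nn_integral_fst[symmetric]) (auto simp: sample_deviation_def ennreal_plus)
    also have "\<dots> = (\<integral>\<^sup>+\<xi>. ennreal \<bar>f (x + \<delta> *\<^sub>R u) \<xi> - F (x + \<delta> *\<^sub>R u)\<bar> \<partial>M)
        + (\<integral>\<^sup>+\<zeta>. ennreal \<bar>f x \<zeta> - F x\<bar> \<partial>M)"
      by (simp add: nn_integral_add emeasure_space_1)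
    also have "\<dots> \<le> ennreal \<sigma>f + ennreal \<sigma>f"
      by (intro add_mono nn_integral_abs_deviation_le)
    finally show "(\<integral>\<^sup>+v. ennreal (?E (u, v)) \<partial>(M \<Otimes>\<^sub>M M)) \<le> ennreal \<sigma>f + ennreal \<sigma>f" .
  qed measurable
  also have "\<dots> = ennreal (2 * \<sigma>f)"
    using sigma_f_nonneg by (simp flip: ennreal_plus)
  finally have nn_le: "(\<integral>\<^sup>+\<omega>. ennreal (?E \<omega>) \<partial>sample_measure) \<le> ennreal (2 * \<sigma>f)" .
  show "integrable sample_measure ?E"
    using nn_le sample_deviation_nonneg by (intro integrableI_nonneg) (auto simp: le_less_trans)
  show "(\<integral>\<omega>. ?E \<omega> \<partial>sample_measure) \<le> 2 * \<sigma>f"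
    using nn_le sample_deviation_nonneg sigma_f_nonneg by (subst integral_eq_nn_integral) (auto intro: enn2real_leI)
qed

lemma AE_sample_measure_norm: "AE \<omega> in sample_measure. norm (fst \<omega>) = 1"
proof -
  interpret MM: prob_space "M \<Otimes>\<^sub>M M"
    by (intro prob_space_pair prob_space_axioms)
  show ?thesis
    by (rule MM.AE_pair_fst) (simp_all add: AE_unif_sphere_norm)
qed

lemma integral_abs_inner_fst_sample_measure:
  shows "integrable sample_measure (\<lambda>\<omega>. \<bar>v \<bullet> fst \<omega>\<bar>)"
    and "(\<integral>\<omega>. \<bar>v \<bullet> fst \<omega>\<bar> \<partial>sample_measure)
      = norm v * (\<integral>u. \<bar>first_basis \<bullet> u\<bar> \<partial>(unif_sphere :: 'a measure))"
proof -
  interpret P: prob_space sample_measure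
    by (rule prob_space_sample_measure)
  interpret MM: prob_space "M \<Otimes>\<^sub>M M"
    by (intro prob_space_pair prob_space_axioms)
  have "\<bar>v \<bullet> u\<bar> \<le> norm v" if "norm u = 1" for u
    using Cauchy_Schwarz_ineq2[of v u] that by simp
  then show "integrable sample_measure (\<lambda>\<omega>. \<bar>v \<bullet> fst \<omega>\<bar>)"
    by (intro P.integrable_const_bound[where B = "norm v"])
      (use AE_sample_measure_norm in \<open>auto elim!: eventually_mono\<close>)
  show "(\<integral>\<omega>. \<bar>v \<bullet> fst \<omega>\<bar> \<partial>sample_measure)
      = norm v * (\<integral>u. \<bar>first_basis \<bullet> u\<bar> \<partial>(unif_sphere :: 'a measure))"
    using integral_abs_inner_unif_sphere[OF norm_first_basis, of v]
    by (subst MM.integral_pair_fst) simp_all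
qed

lemma integral_norm_sq_fst_sample_measure:
  shows "integrable sample_measure (\<lambda>\<omega>. (norm (fst \<omega>))\<^sup>2)"
    and "(\<integral>\<omega>. (norm (fst \<omega>))\<^sup>2 \<partial>sample_measure) = 1"
proof -
  interpret P: prob_space sample_measure
    by (rule prob_space_sample_measure)
  interpret MM: prob_space "M \<Otimes>\<^sub>M M"
    by (intro prob_space_pair prob_space_axioms)
  show "integrable sample_measure (\<lambda>\<omega>. (norm (fst \<omega>))\<^sup>2)"
    by (rule P.integrable_const_bound[where B = 1])
      (use AE_sample_measure_norm in \<open>auto elim!: eventually_mono\<close>)
  show "(\<integral>\<omega>. (norm (fst \<omega>))\<^sup>2 \<partial>sample_measure) = 1"
    by (subst MM.integral_pair_fst) (simp_all add: integral_norm_sq_unif_sphere)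
qed

lemma integrable_inner_sign_grad_estimator:
  assumes s0: "s0 \<in> {1, -1}" and \<delta>: "\<delta> > 0"
  shows "integrable sample_measure (\<lambda>\<omega>. v \<bullet> sign_grad_estimator f s0 \<delta> x \<omega>)"
proof -
  interpret P: prob_space sample_measure
    by (rule prob_space_sample_measure)
  have "AE \<omega> in sample_measure. norm (v \<bullet> sign_grad_estimator f s0 \<delta> x \<omega>) \<le> norm v * (real DIM('a) / \<delta>)"
    using AE_sample_measure_norm
  proof eventually_elim
    case (elim \<omega>)
    then show ?case
      using Cauchy_Schwarz_ineq2[of v "sign_grad_estimator f s0 \<delta> x \<omega>"]
      by (cases \<omega>) (simp add: norm_sign_grad_estimator[OF s0 \<delta>])
  qed
  then show ?thesis
    by (rule P.integrable_const_bound) measurable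
qed

lemma integral_inner_sign_grad_estimator_ge:
  assumes s0: "s0 \<in> {1, -1}" and \<delta>: "\<delta> > 0"
  shows "(\<integral>u. \<bar>first_basis \<bullet> u\<bar> \<partial>(unif_sphere :: 'a measure)) * real DIM('a) / \<delta> * norm (G x)
      - real DIM('a) * L - 4 * real DIM('a) * \<sigma>f / \<delta>\<^sup>2
    \<le> (\<integral>\<omega>. G x \<bullet> sign_grad_estimator f s0 \<delta> x \<omega> \<partial>sample_measure)"
proof -
  let ?d = "real DIM('a)" and ?g = "sign_grad_estimator f s0 \<delta> x"
  let ?c = "\<integral>u. \<bar>first_basis \<bullet> u\<bar> \<partial>(unif_sphere :: 'a measure)"
  define low where "low \<omega> = ?d / \<delta> * \<bar>G x \<bullet> fst \<omega>\<bar> - 2 * ?d / \<delta>\<^sup>2 * sample_deviation x \<delta> \<omega>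
    - ?d * L * (norm (fst \<omega>))\<^sup>2" for \<omega>
  have low_le: "low \<omega> \<le> G x \<bullet> ?g \<omega>" for \<omega>
  proof (cases \<omega>)
    case (fields u \<xi> \<zeta>)
    have "\<bar>F (x + \<delta> *\<^sub>R u) - F x - \<delta> * (G x \<bullet> u)\<bar> \<le> L / 2 * \<delta>\<^sup>2 * (norm u)\<^sup>2"
      using F_taylor[of x "\<delta> *\<^sub>R u"] \<delta> by (simp add: power_mult_distrib)
    from inner_sign_grad_estimator_ge[OF s0 \<delta> this, of f \<xi> \<zeta>] show ?thesis
      using \<delta> by (simp add: low_def sample_deviation_def fields algebra_simps power2_eq_square)
  qed
  note integrable = integral_abs_inner_fst_sample_measure(1) integral_norm_sq_fst_sample_measure(1)
    integral_sample_deviation_le(1)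
  have integral_low: "(\<integral>\<omega>. low \<omega> \<partial>sample_measure)
      = ?d / \<delta> * (norm (G x) * ?c) - 2 * ?d / \<delta>\<^sup>2 * (\<integral>\<omega>. sample_deviation x \<delta> \<omega> \<partial>sample_measure) - ?d * L"
    unfolding low_def using integrable
    by (simp add: integral_abs_inner_fst_sample_measure(2) integral_norm_sq_fst_sample_measure(2))
  have "2 * ?d / \<delta>\<^sup>2 * (\<integral>\<omega>. sample_deviation x \<delta> \<omega> \<partial>sample_measure) \<le> 2 * ?d / \<delta>\<^sup>2 * (2 * \<sigma>f)"
    by (intro mult_left_mono integral_sample_deviation_le(2)) simp
  then have "?c * ?d / \<delta> * norm (G x) - ?d * L - 4 * ?d * \<sigma>f / \<delta>\<^sup>2 \<le> (\<integral>\<omega>. low \<omega> \<partial>sample_measure)"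
    unfolding integral_low by (simp add: field_simps)
  also have "\<dots> \<le> (\<integral>\<omega>. G x \<bullet> ?g \<omega> \<partial>sample_measure)"
    using integrable integrable_inner_sign_grad_estimator[OF s0 \<delta>] low_le
    by (intro integral_mono) (auto simp: low_def)
  finally show ?thesis .
qed

lemma integral_step_sign_grad_estimator_le:
  assumes s0: "s0 \<in> {1, -1}" and \<delta>: "\<delta> > 0" and \<eta>: "\<eta> > 0"
  shows "(\<integral>\<omega>. F (x - \<eta> *\<^sub>R sign_grad_estimator f s0 \<delta> x \<omega>) \<partial>sample_measure)
    \<le> F x - (\<integral>u. \<bar>first_basis \<bullet> u\<bar> \<partial>(unif_sphere :: 'a measure)) * \<eta> * real DIM('a) / \<delta> * norm (G x)
      + \<eta> * real DIM('a) * L + 4 * \<eta> * real DIM('a) * \<sigma>f / \<delta>\<^sup>2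
      + L * \<eta>\<^sup>2 * (real DIM('a))\<^sup>2 / (2 * \<delta>\<^sup>2)"
proof -
  let ?d = "real DIM('a)" and ?g = "sign_grad_estimator f s0 \<delta> x"
  let ?c = "\<integral>u. \<bar>first_basis \<bullet> u\<bar> \<partial>(unif_sphere :: 'a measure)"
  have "AE \<omega> in sample_measure. norm (?g \<omega>) \<le> ?d / \<delta>"
    using AE_sample_measure_norm
    by eventually_elim (auto simp: split_beta norm_sign_grad_estimator[OF s0 \<delta>])
  then have "(\<integral>\<omega>. F (x - \<eta> *\<^sub>R ?g \<omega>) \<partial>sample_measure)
      \<le> F x - \<eta> * (\<integral>\<omega>. G x \<bullet> ?g \<omega> \<partial>sample_measure) + L / 2 * \<eta>\<^sup>2 * (\<integral>\<omega>. (norm (?g \<omega>))\<^sup>2 \<partial>sample_measure)"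
    by (intro integral_descent_step_le prob_space_sample_measure F_measurable
        measurable_sign_grad_estimator F_taylor)
  also have "\<dots> = F x - \<eta> * (\<integral>\<omega>. G x \<bullet> ?g \<omega> \<partial>sample_measure) + L / 2 * \<eta>\<^sup>2 * (?d\<^sup>2 / \<delta>\<^sup>2)"
    by (simp add: integral_norm_sign_grad_estimator_sq[OF prob_space_axioms s0 \<delta>])
  also have "\<dots> \<le> F x - \<eta> * (?c * ?d / \<delta> * norm (G x) - ?d * L - 4 * ?d * \<sigma>f / \<delta>\<^sup>2)
      + L / 2 * \<eta>\<^sup>2 * (?d\<^sup>2 / \<delta>\<^sup>2)"
    using \<eta> integral_inner_sign_grad_estimator_ge[OF s0 \<delta>] by simp
  finally show ?thesis
    by (simp add: algebra_simps)
qed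

end

theorem mainTheorem2:
  fixes f :: "'a::euclidean_space \<Rightarrow> 'b \<Rightarrow> real"
    and gradf :: "'a \<Rightarrow> 'b \<Rightarrow> 'a"
    and H :: "'a \<Rightarrow> 'b \<Rightarrow> 'a \<Rightarrow>\<^sub>L 'a"
    and M :: "'b measure"
    and L \<sigma> \<sigma>f \<delta> \<eta> s0 :: real
    and x :: 'a
  assumes M: "prob_space M"
    and f_grad: "\<And>y \<xi>. ((\<lambda>z. f z \<xi>) has_derivative (\<lambda>h. gradf y \<xi> \<bullet> h)) (at y)"
    and f_hess: "\<And>y \<xi>. ((\<lambda>z. gradf z \<xi>) has_derivative blinfun_apply (H y \<xi>)) (at y)"
    and H_cont: "\<And>\<xi>. continuous_on UNIV (\<lambda>y. H y \<xi>)"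
    and H_bound: "\<And>y \<xi>. norm (H y \<xi>) \<le> L"
    and f_meas: "\<And>y. (\<lambda>\<xi>. f y \<xi>) \<in> borel_measurable M"
    and gradf_meas: "\<And>y. (\<lambda>\<xi>. gradf y \<xi>) \<in> borel_measurable M"
    and f_sq: "\<And>y. integrable M (\<lambda>\<xi>. (f y \<xi>)\<^sup>2)"
    and gradf_sq: "\<And>y. integrable M (\<lambda>\<xi>. (norm (gradf y \<xi>))\<^sup>2)"
    and F_grad: "\<And>y. ((\<lambda>z. \<integral>\<xi>. f z \<xi> \<partial>M) has_derivative
                          (\<lambda>h. (\<integral>\<xi>. gradf y \<xi> \<partial>M) \<bullet> h)) (at y)"
    and var_grad: "\<And>y. (\<integral>\<xi>. (norm (gradf y \<xi> - (\<integral>\<zeta>. gradf y \<zeta> \<partial>M)))\<^sup>2 \<partial>M) \<le> \<sigma>\<^sup>2"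
    and var_f: "\<And>y. (\<integral>\<xi>. (f y \<xi>)\<^sup>2 \<partial>M) - (\<integral>\<xi>. f y \<xi> \<partial>M)\<^sup>2 \<le> \<sigma>f\<^sup>2"
    and \<sigma>_nonneg: "\<sigma> \<ge> 0" and \<sigma>f_nonneg: "\<sigma>f \<ge> 0"
    and \<delta>_pos: "\<delta> > 0" and \<eta>_pos: "\<eta> > 0"
    and s0: "s0 \<in> {1, -1}"
  defines "F \<equiv> (\<lambda>y. \<integral>\<xi>. f y \<xi> \<partial>M)"
    and "gF \<equiv> (\<integral>\<xi>. gradf x \<xi> \<partial>M)"
    and "d \<equiv> real DIM('a)"
    and "P \<equiv> (unif_sphere :: 'a measure) \<Otimes>\<^sub>M (M \<Otimes>\<^sub>M M)"
    and "g \<equiv> (\<lambda>(u, \<xi>, \<zeta>). (real DIM('a) / \<delta> * sgn_with s0 (f (x + \<delta> *\<^sub>R u) \<xi> - f x \<zeta>)) *\<^sub>R u)"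
    and "c \<equiv> (\<integral>u. \<bar>first_basis \<bullet> u\<bar> \<partial>(unif_sphere :: 'a measure))"
  shows "((\<integral>\<omega>. (norm (g \<omega>))\<^sup>2 \<partial>P) = d\<^sup>2 / \<delta>\<^sup>2)
       \<and> c > 0
       \<and> ((\<integral>\<omega>. gF \<bullet> g \<omega> \<partial>P) \<ge> c * d / \<delta> * norm gF - d * L - d * \<sigma> / \<delta> - 4 * d * \<sigma>f / \<delta>\<^sup>2)
       \<and> ((\<integral>\<omega>. F (x - \<eta> *\<^sub>R g \<omega>) \<partial>P) \<le> F x - c * \<eta> * d / \<delta> * norm gF + \<eta> * d * L
           + \<eta> * d * \<sigma> / \<delta> + 4 * \<eta> * d * \<sigma>f / \<delta>\<^sup>2 + L * \<eta>\<^sup>2 * d\<^sup>2 / (2 * \<delta>\<^sup>2))"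
proof -
  interpret M: prob_space M
    by (rule M)
  define G where "G y = (\<integral>\<xi>. gradf y \<xi> \<partial>M)" for y
  have F_taylor: "\<bar>F (y + h) - F y - G y \<bullet> h\<bar> \<le> L / 2 * (norm h)\<^sup>2" for y h
    unfolding F_def G_def by (rule M.taylor_bound_of_hessian_bound[OF f_hess H_bound gradf_meas gradf_sq F_grad])
  interpret noisy_smooth_objective M f F G L \<sigma>f
  proof
    show "continuous_on UNIV (\<lambda>y. f y \<xi>)" for \<xi>
      using has_derivative_continuous[OF f_grad] by (simp add: continuous_at_imp_continuous_on)
    show "F \<in> borel_measurable borel"
      using has_derivative_continuous[OF F_grad] unfolding F_def
      by (intro borel_measurable_continuous_onI) (simp add: continuous_at_imp_continuous_on)
    show "integrable M (\<lambda>\<xi>. \<bar>f y \<xi> - F y\<bar>)" "(\<integral>\<xi>. \<bar>f y \<xi> - F y\<bar> \<partial>M) \<le> \<sigma>f" for y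
      using M.integral_abs_deviation_le[OF f_meas f_sq var_f \<sigma>f_nonneg] by (simp_all add: F_def)
  qed (use f_meas F_taylor in auto)
  have "g = sign_grad_estimator f s0 \<delta> x"
    by (simp add: g_def sign_grad_estimator_def)
  moreover have "gF = G x"
    by (simp add: gF_def G_def)
  \<comment> \<open>The gradient-noise terms are slack: the evaluation noise \<open>\<sigma>f\<close> alone controls the error.\<close>
  moreover have "0 \<le> d * \<sigma> / \<delta>" "0 \<le> \<eta> * d * \<sigma> / \<delta>"
    using \<sigma>_nonneg \<delta>_pos \<eta>_pos by (simp_all add: d_def)
  ultimately show ?thesis
    using integral_norm_sign_grad_estimator_sq[OF M s0 \<delta>_pos, of f x]
      integral_abs_inner_unif_sphere_pos[OF norm_first_basis]
      integral_inner_sign_grad_estimator_ge[OF s0 \<delta>_pos, of x]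
      integral_step_sign_grad_estimator_le[OF s0 \<delta>_pos \<eta>_pos, of x]
    unfolding P_def c_def d_def by auto
qed

end
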